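(* Let $n\ge 3$, let $M\in\mathbb{R}^{n\times n}$ be a primitive doubly-stochastic matrix (nonnegative entries, $M\mathbf{1}=\mathbf{1}$, $M^\top\mathbf{1}=\mathbf{1}$, some power of $M$ entrywise positive), and let $\nu>0$. Let $\mathcal{P}_{\perp} = I_n - \frac1n \mathbf{1}\mathbf{1}^\top$ and $\mathcal{V}_{\perp} = \{x : \langle x,\mathbf{1}\rangle = 0\}$. Let $\mathbf{x}_{\perp},\mathbf{x}'_{\perp}\in\mathcal{V}_{\perp}$, set $\mathbf{s}=M\mathbf{x}_{\perp}$, $\mathbf{s}'=M\mathbf{x}'_{\perp}$, and let $\boldsymbol{\xi},\boldsymbol{\xi}'$ be independent random vectors with $\boldsymbol{\xi},\boldsymbol{\xi}'\sim\mathcal{N}(\mathbf{0},\frac{\nu^2}{n}I_n)$. Define the normalized outputs \[ \mathbf{u} = \frac{\mathcal{P}_{\perp}(\mathbf{s}+\boldsymbol{\xi})}{\|\mathcal{P}_{\perp}(\mathbf{s}+\boldsymbol{\xi})\|_2},\qquad \mathbf{v} = \frac{\mathcal{P}_{\perp}(\mathbf{s}'+\boldsymbol{\xi}')}{\|\mathcal{P}_{\perp}(\mathbf{s}'+\boldsymbol{\xi}')\|_2}, \] and the spectral signal-to-noise ratio \[ \gamma := \frac{\max(\|\mathbf{s}\|_2,\|\mathbf{s}'\|_2)}{\mathbb{E}\big[\|\mathcal{P}_{\perp}\boldsymbol{\xi}\|_2\big]}. \] Assume $\gamma\le 1/8$. Then for any $\epsilon>0$ and any failure tolerance $\delta\in(0,1)$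 there exist constants $C$ and $c>0$ such that, with probability at least $1-\delta-Ce^{-cn\epsilon^2}$, \[ |\langle \mathbf{u},\mathbf{v}\rangle| \le \epsilon + 8\gamma . \]
   Context: $\mathbf{1}$ is the all-ones vector in $\mathbb{R}^n$; $\|\cdot\|_2$ is the Euclidean norm and $\langle\cdot,\cdot\rangle$ the Euclidean inner product. The map $\mathbf{y}\mapsto \mathcal{P}_{\perp}\mathbf{y}/\|\mathcal{P}_{\perp}\mathbf{y}\|_2$ is (up to the factor $\sqrt n$) Layer Normalization without affine parameters. *)

theory Defs
  imports "HOL-Probability.Probability" "Jordan_Normal_Form.Matrix"
begin

definition ones_vec :: "nat \<Rightarrow> real vec" where
  "ones_vec n = vec n (\<lambda>_. 1)"

definition vnorm :: "real vec \<Rightarrow> real" where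
  "vnorm v = sqrt (scalar_prod v v)"

definition proj_perp :: "nat \<Rightarrow> real mat" where
  "proj_perp n = 1\<^sub>m n - (1 / real n) \<cdot>\<^sub>m mat n n (\<lambda>_. 1)"

definition layer_norm :: "nat \<Rightarrow> real vec \<Rightarrow> real vec" where
  "layer_norm n y = (1 / vnorm (proj_perp n *\<^sub>v y)) \<cdot>\<^sub>v (proj_perp n *\<^sub>v y)"

definition doubly_stochastic :: "nat \<Rightarrow> real mat \<Rightarrow> bool" where
  "doubly_stochastic n M \<longleftrightarrow> M \<in> carrier_mat n n
     \<and> (\<forall>i<n. \<forall>j<n. M $$ (i,j) \<ge> 0)
     \<and> M *\<^sub>v ones_vec n = ones_vec n
     \<and> transpose_mat M *\<^sub>v ones_vec n = ones_vec n"

definition primitive_mat :: "nat \<Rightarrow> real mat \<Rightarrow> bool" where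
  "primitive_mat n M \<longleftrightarrow> (\<exists>k. \<forall>i<n. \<forall>j<n. (M ^\<^sub>m k) $$ (i,j) > 0)"

text \<open>Law of a Gaussian vector N(0, sigma^2 I_n): product of n independent
  N(0, sigma^2) coordinates, as a measure on functions nat => real
  (coordinates 0..n-1).\<close>
definition gauss_vec :: "nat \<Rightarrow> real \<Rightarrow> (nat \<Rightarrow> real) measure" where
  "gauss_vec n \<sigma> = PiM {..<n} (\<lambda>_. density lborel (normal_density 0 \<sigma>))"

end

theory Submission
  imports Defs
begin

text \<open>Put \<open>\<sigma> = \<nu> / sqrt n\<close> and let \<open>w\<close>, \<open>w'\<close> be the projected noise vectors.
  Chebyshev's inequality for \<open>\<Sum>\<xi>\<^sub>i\<close>, \<open>\<Sum>(\<xi>\<^sub>i\<^sup>2 - \<sigma>\<^sup>2)\<close> and \<open>\<Sum>\<xi>\<^sub>i\<xi>'\<^sub>i\<close>, whose second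
  moments are explicit Gaussian moments, shows that outside an event of probability \<open>O(1/(\<eta>\<^sup>2 n))\<close>
  both \<open>w\<close> and \<open>w'\<close> have norm at least \<open>(1 - \<eta>) \<sigma> sqrt n\<close> while \<open>\<bar>\<langle>w, w'\<rangle>\<bar> \<le> \<eta> \<sigma>\<^sup>2 n\<close>.
  Since the expected norm of \<open>w\<close> is at most \<open>\<sigma> sqrt n\<close>, the projected signals have norm at most
  \<open>\<gamma> \<sigma> sqrt n\<close>, and Cauchy-Schwarz bounds the inner product of the normalised vectors by
  \<open>\<epsilon> + 8\<gamma>\<close> once \<open>\<eta> \<le> \<epsilon>/2\<close>. The failure probability only decays like \<open>1/n\<close>; the constant
  \<open>C = exp (K \<epsilon>\<^sup>2)\<close> with \<open>K = 24 / (\<eta>\<^sup>2 \<delta>)\<close> absorbs this, since the claim is vacuous for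
  \<open>n < K\<close>.\<close>

lemma normal_density_moments:
  fixes \<sigma> :: real
  assumes \<sigma>: "0 < \<sigma>"
  defines "N \<equiv> density lborel (normal_density 0 \<sigma>)"
  shows "prob_space N"
    and "\<And>k. integrable N (\<lambda>x. x ^ k)"
    and "(\<integral>x. x \<partial>N) = 0"
    and "(\<integral>x. x^2 \<partial>N) = \<sigma>^2"
    and "(\<integral>x. x^4 \<partial>N) = 3 * \<sigma>^4"
proof -
  have integrable_N: "integrable N f \<longleftrightarrow> integrable lborel (\<lambda>x. normal_density 0 \<sigma> x * f x)"
    if [measurable]: "f \<in> borel_measurable borel" for f :: "real \<Rightarrow> real"
    unfolding N_def by (subst integrable_density) auto
  have integral_N: "integral\<^sup>L N f = integral\<^sup>L lborel (\<lambda>x. normal_density 0 \<sigma> x * f x)"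
    if [measurable]: "f \<in> borel_measurable borel" for f :: "real \<Rightarrow> real"
    unfolding N_def by (subst integral_density) auto
  show "prob_space N"
    unfolding N_def by (rule prob_space_normal_density[OF \<sigma>])
  show "integrable N (\<lambda>x. x ^ k)" for k
    using integrable_normal_moment[OF \<sigma>, of 0 k] by (subst integrable_N) auto
  show "(\<integral>x. x \<partial>N) = 0"
    using integral_normal_moment_odd[OF \<sigma>, of 0 0] by (subst integral_N) auto
  have "(LBINT x. normal_density 0 \<sigma> x * (x - 0) ^ (2 * 1)) = \<sigma>^2"
    by (subst integral_normal_moment_even[OF \<sigma>]) (simp add: field_simps)
  then show "(\<integral>x. x^2 \<partial>N) = \<sigma>^2"
    by (subst integral_N) auto
  have "(LBINT x. normal_density 0 \<sigma> x * (x - 0) ^ (2 * 2)) = 3 * \<sigma>^4"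
    by (subst integral_normal_moment_even[OF \<sigma>]) (simp add: field_simps fact_numeral)
  then show "(\<integral>x. x^4 \<partial>N) = 3 * \<sigma>^4"
    by (subst integral_N) auto
qed

lemma
  fixes M :: "'i \<Rightarrow> 'a measure" and g :: "'i \<Rightarrow> 'a \<Rightarrow> real"
  assumes I: "finite I" "i \<in> I" "j \<in> I"
    and prob: "\<And>k. prob_space (M k)"
    and g: "\<And>k. k \<in> I \<Longrightarrow> integrable (M k) (g k)"
    and g2: "\<And>k. k \<in> I \<Longrightarrow> integrable (M k) (\<lambda>x. (g k x)^2)"
  shows integrable_PiM_mult_components: "integrable (PiM I M) (\<lambda>\<xi>. g i (\<xi> i) * g j (\<xi> j))"
    and integral_PiM_mult_components: "(\<integral>\<xi>. g i (\<xi> i) * g j (\<xi> j) \<partial>PiM I M) =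
      (if i = j then \<integral>x. (g i x)^2 \<partial>M i else integral\<^sup>L (M i) (g i) * integral\<^sup>L (M j) (g j))"
proof -
  interpret product_sigma_finite M
    unfolding product_sigma_finite_def using prob prob_space_imp_sigma_finite by blast
  define F where
    "F k = (\<lambda>x. (if k = i then g i x else 1) * (if k = j then g j x else 1))" for k
  have prod_F: "(\<Prod>k\<in>I. F k (\<xi> k)) = g i (\<xi> i) * g j (\<xi> j)" for \<xi>
    unfolding F_def prod.distrib using I by (simp add: prod.delta')
  have F: "integrable (M k) (F k)" if "k \<in> I" for k
  proof -
    interpret prob_space "M k" by (rule prob)
    show ?thesis
      using g[OF I(2)] g[OF I(3)] g2[OF I(2)] that
      by (cases "k = i"; cases "k = j") (auto simp: F_def power2_eq_square)
  qed
  show "integrable (PiM I M) (\<lambda>\<xi>. g i (\<xi> i) * g j (\<xi> j))"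
    using product_integrable_prod[OF I(1) F] by (simp add: prod_F)
  have "(\<integral>\<xi>. g i (\<xi> i) * g j (\<xi> j) \<partial>PiM I M) = (\<Prod>k\<in>I. integral\<^sup>L (M k) (F k))"
    using product_integral_prod[OF I(1) F] by (simp add: prod_F)
  also have "\<dots> = (if i = j then \<integral>x. (g i x)^2 \<partial>M i else integral\<^sup>L (M i) (g i) * integral\<^sup>L (M j) (g j))"
  proof (cases "i = j")
    case True
    then have "integral\<^sup>L (M k) (F k) = (if k = i then \<integral>x. (g i x)^2 \<partial>M i else 1)" for k
      using prob_space.prob_space[OF prob] by (simp add: F_def power2_eq_square)
    then show ?thesis
      using True I by (simp add: prod.delta')
  next
    case False
    then have "integral\<^sup>L (M k) (F k) =
        (if k = i then integral\<^sup>L (M i) (g i) else 1) * (if k = j then integral\<^sup>L (M j) (g j) else 1)" for k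
      using prob_space.prob_space[OF prob] by (simp add: F_def)
    then show ?thesis
      using False I by (simp add: prod.distrib prod.delta')
  qed
  finally show "(\<integral>\<xi>. g i (\<xi> i) * g j (\<xi> j) \<partial>PiM I M) =
      (if i = j then \<integral>x. (g i x)^2 \<partial>M i else integral\<^sup>L (M i) (g i) * integral\<^sup>L (M j) (g j))" .
qed

lemma
  fixes M :: "'i \<Rightarrow> 'a measure" and g :: "'i \<Rightarrow> 'a \<Rightarrow> real"
  assumes I: "finite I"
    and prob: "\<And>k. prob_space (M k)"
    and g: "\<And>k. k \<in> I \<Longrightarrow> integrable (M k) (g k)"
    and g2: "\<And>k. k \<in> I \<Longrightarrow> integrable (M k) (\<lambda>x. (g k x)^2)"
    and mean_zero: "\<And>k. k \<in> I \<Longrightarrow> integral\<^sup>L (M k) (g k) = 0"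
  shows integrable_PiM_square_sum: "integrable (PiM I M) (\<lambda>\<xi>. (\<Sum>i\<in>I. g i (\<xi> i))^2)"
    and integral_PiM_square_sum: "(\<integral>\<xi>. (\<Sum>i\<in>I. g i (\<xi> i))^2 \<partial>PiM I M) = (\<Sum>i\<in>I. \<integral>x. (g i x)^2 \<partial>M i)"
proof -
  have square_sum: "(\<Sum>i\<in>I. g i (\<xi> i))^2 = (\<Sum>i\<in>I. \<Sum>j\<in>I. g i (\<xi> i) * g j (\<xi> j))" for \<xi>
    by (simp add: power2_eq_square sum_product)
  note integrable = integrable_PiM_mult_components[of I _ _ M g, OF I _ _ prob g g2]
  show "integrable (PiM I M) (\<lambda>\<xi>. (\<Sum>i\<in>I. g i (\<xi> i))^2)"
    unfolding square_sum by (intro Bochner_Integration.integrable_sum integrable)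
  have "(\<integral>\<xi>. (\<Sum>i\<in>I. g i (\<xi> i))^2 \<partial>PiM I M) =
      (\<Sum>i\<in>I. \<Sum>j\<in>I. \<integral>\<xi>. g i (\<xi> i) * g j (\<xi> j) \<partial>PiM I M)"
    unfolding square_sum using integrable
    by (subst Bochner_Integration.integral_sum)
      (auto intro!: sum.cong Bochner_Integration.integral_sum Bochner_Integration.integrable_sum)
  also have "\<dots> = (\<Sum>i\<in>I. \<Sum>j\<in>I. if i = j then \<integral>x. (g i x)^2 \<partial>M i else 0)"
  proof (intro sum.cong refl)
    fix i j assume ij: "i \<in> I" "j \<in> I"
    then show "(\<integral>\<xi>. g i (\<xi> i) * g j (\<xi> j) \<partial>PiM I M) = (if i = j then \<integral>x. (g i x)^2 \<partial>M i else 0)"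
      using integral_PiM_mult_components[of I i j M g, OF I ij prob g g2] mean_zero by simp
  qed
  also have "\<dots> = (\<Sum>i\<in>I. \<integral>x. (g i x)^2 \<partial>M i)"
    using I by (simp add: sum.delta)
  finally show "(\<integral>\<xi>. (\<Sum>i\<in>I. g i (\<xi> i))^2 \<partial>PiM I M) = (\<Sum>i\<in>I. \<integral>x. (g i x)^2 \<partial>M i)" .
qed

lemma gauss_vec_component_measurable [measurable]:
  assumes "i < n"
  shows "(\<lambda>\<xi>. \<xi> i) \<in> borel_measurable (gauss_vec n \<sigma>)"
proof -
  have "(\<lambda>\<xi>. \<xi> i) \<in> gauss_vec n \<sigma> \<rightarrow>\<^sub>M density lborel (normal_density 0 \<sigma>)"
    unfolding gauss_vec_def using assms by (intro measurable_component_singleton) simp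
  then show ?thesis
    by (simp cong: measurable_cong_sets)
qed

context
  fixes \<sigma> :: real
  assumes \<sigma>: "0 < \<sigma>"
begin

lemma prob_space_gauss_vec: "prob_space (gauss_vec n \<sigma>)"
  unfolding gauss_vec_def by (intro prob_space_PiM prob_space_normal_density[OF \<sigma>])

lemma
  fixes c :: "nat \<Rightarrow> real"
  shows integrable_gauss_vec_linear_square: "integrable (gauss_vec n \<sigma>) (\<lambda>\<xi>. (\<Sum>i<n. c i * \<xi> i)^2)"
    and integral_gauss_vec_linear_square:
      "(\<integral>\<xi>. (\<Sum>i<n. c i * \<xi> i)^2 \<partial>gauss_vec n \<sigma>) = \<sigma>^2 * (\<Sum>i<n. (c i)^2)"
proof -
  note N = normal_density_moments[OF \<sigma>]
  note square_sum = integrable_PiM_square_sum[of "{..<n}" "\<lambda>_. density lborel (normal_density 0 \<sigma>)"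
      "\<lambda>i x. c i * x", folded gauss_vec_def, OF _ N(1)]
    integral_PiM_square_sum[of "{..<n}" "\<lambda>_. density lborel (normal_density 0 \<sigma>)"
      "\<lambda>i x. c i * x", folded gauss_vec_def, OF _ N(1)]
  have moments: "integrable (density lborel (normal_density 0 \<sigma>)) (\<lambda>x. c i * x)"
    "integrable (density lborel (normal_density 0 \<sigma>)) (\<lambda>x. (c i * x)^2)"
    "(\<integral>x. c i * x \<partial>density lborel (normal_density 0 \<sigma>)) = 0"
    "(\<integral>x. (c i * x)^2 \<partial>density lborel (normal_density 0 \<sigma>)) = \<sigma>^2 * (c i)^2" for i
    using N(2)[of 1] N(2)[of 2] N(3) N(4) by (simp_all add: power_mult_distrib)
  show "integrable (gauss_vec n \<sigma>) (\<lambda>\<xi>. (\<Sum>i<n. c i * \<xi> i)^2)"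
    using square_sum(1) moments by simp
  show "(\<integral>\<xi>. (\<Sum>i<n. c i * \<xi> i)^2 \<partial>gauss_vec n \<sigma>) = \<sigma>^2 * (\<Sum>i<n. (c i)^2)"
    using square_sum(2) moments by (simp add: sum_distrib_left)
qed

lemma
  shows integrable_gauss_vec_sum_squares: "integrable (gauss_vec n \<sigma>) (\<lambda>\<xi>. \<Sum>i<n. (\<xi> i)^2)"
    and integral_gauss_vec_sum_squares: "(\<integral>\<xi>. (\<Sum>i<n. (\<xi> i)^2) \<partial>gauss_vec n \<sigma>) = real n * \<sigma>^2"
proof -
  note N = normal_density_moments[OF \<sigma>]
  have "integrable (gauss_vec n \<sigma>) (\<lambda>\<xi>. (\<xi> i)^2)" "(\<integral>\<xi>. (\<xi> i)^2 \<partial>gauss_vec n \<sigma>) = \<sigma>^2"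
    if "i < n" for i
    using integrable_PiM_mult_components[of "{..<n}" i i "\<lambda>_. density lborel (normal_density 0 \<sigma>)"
        "\<lambda>_ x. x", folded gauss_vec_def, OF _ _ _ N(1)]
      integral_PiM_mult_components[of "{..<n}" i i "\<lambda>_. density lborel (normal_density 0 \<sigma>)"
        "\<lambda>_ x. x", folded gauss_vec_def, OF _ _ _ N(1)]
      N(2)[of 1] N(2)[of 2] N(4) that
    by (simp_all add: power2_eq_square)
  then show "integrable (gauss_vec n \<sigma>) (\<lambda>\<xi>. \<Sum>i<n. (\<xi> i)^2)"
    and "(\<integral>\<xi>. (\<Sum>i<n. (\<xi> i)^2) \<partial>gauss_vec n \<sigma>) = real n * \<sigma>^2"
    by (auto intro!: Bochner_Integration.integrable_sum simp: Bochner_Integration.integral_sum)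
qed

lemma
  shows integrable_gauss_vec_sum_squares_variance:
      "integrable (gauss_vec n \<sigma>) (\<lambda>\<xi>. (\<Sum>i<n. (\<xi> i)^2 - \<sigma>^2)^2)"
    and integral_gauss_vec_sum_squares_variance:
      "(\<integral>\<xi>. (\<Sum>i<n. (\<xi> i)^2 - \<sigma>^2)^2 \<partial>gauss_vec n \<sigma>) = 2 * real n * \<sigma>^4"
proof -
  note N = normal_density_moments[OF \<sigma>]
  interpret N: prob_space "density lborel (normal_density 0 \<sigma>)" by (rule N(1))
  have N_UNIV: "N.prob UNIV = 1"
    using N.prob_space by simp
  note square_sum = integrable_PiM_square_sum[of "{..<n}" "\<lambda>_. density lborel (normal_density 0 \<sigma>)"
      "\<lambda>i x. x^2 - \<sigma>^2", folded gauss_vec_def, OF _ N(1)]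
    integral_PiM_square_sum[of "{..<n}" "\<lambda>_. density lborel (normal_density 0 \<sigma>)"
      "\<lambda>i x. x^2 - \<sigma>^2", folded gauss_vec_def, OF _ N(1)]
  have expand: "(\<lambda>x. (x^2 - \<sigma>^2)^2) = (\<lambda>x::real. x^4 - 2 * \<sigma>^2 * x^2 + \<sigma>^4)"
    by (auto simp: power2_eq_square power4_eq_xxxx algebra_simps)
  have moments: "integrable (density lborel (normal_density 0 \<sigma>)) (\<lambda>x. x^2 - \<sigma>^2)"
    "integrable (density lborel (normal_density 0 \<sigma>)) (\<lambda>x. (x^2 - \<sigma>^2)^2)"
    "(\<integral>x. x^2 - \<sigma>^2 \<partial>density lborel (normal_density 0 \<sigma>)) = 0"
    "(\<integral>x. (x^2 - \<sigma>^2)^2 \<partial>density lborel (normal_density 0 \<sigma>)) = 2 * \<sigma>^4"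
    unfolding expand using N(2)[of 2] N(2)[of 4] N(4) N(5)
    by (simp_all add: N_UNIV power2_eq_square power4_eq_xxxx)
  show "integrable (gauss_vec n \<sigma>) (\<lambda>\<xi>. (\<Sum>i<n. (\<xi> i)^2 - \<sigma>^2)^2)"
    using square_sum(1) moments by simp
  show "(\<integral>\<xi>. (\<Sum>i<n. (\<xi> i)^2 - \<sigma>^2)^2 \<partial>gauss_vec n \<sigma>) = 2 * real n * \<sigma>^4"
    using square_sum(2) moments by simp
qed

lemma
  shows integrable_gauss_vec_pair_inner_square:
      "integrable (gauss_vec n \<sigma> \<Otimes>\<^sub>M gauss_vec n \<sigma>) (\<lambda>p. (\<Sum>i<n. fst p i * snd p i)^2)"
    and integral_gauss_vec_pair_inner_square:
      "(\<integral>p. (\<Sum>i<n. fst p i * snd p i)^2 \<partial>(gauss_vec n \<sigma> \<Otimes>\<^sub>M gauss_vec n \<sigma>)) = real n * \<sigma>^4"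
proof -
  interpret G: prob_space "gauss_vec n \<sigma>" by (rule prob_space_gauss_vec)
  interpret pair_prob_space "gauss_vec n \<sigma>" "gauss_vec n \<sigma>" ..
  have inner: "(\<integral>\<xi>'. (\<Sum>i<n. \<xi> i * \<xi>' i)^2 \<partial>gauss_vec n \<sigma>) = \<sigma>^2 * (\<Sum>i<n. (\<xi> i)^2)" for \<xi>
    by (rule integral_gauss_vec_linear_square)
  show integrable: "integrable (gauss_vec n \<sigma> \<Otimes>\<^sub>M gauss_vec n \<sigma>) (\<lambda>p. (\<Sum>i<n. fst p i * snd p i)^2)"
    by (rule Fubini_integrable)
      (simp_all add: inner integrable_gauss_vec_linear_square integrable_gauss_vec_sum_squares)
  have "(\<integral>p. (\<Sum>i<n. fst p i * snd p i)^2 \<partial>(gauss_vec n \<sigma> \<Otimes>\<^sub>M gauss_vec n \<sigma>)) =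
      (\<integral>\<xi>. \<sigma>^2 * (\<Sum>i<n. (\<xi> i)^2) \<partial>gauss_vec n \<sigma>)"
    using integral_fst'[OF integrable] by (simp add: inner)
  also have "\<dots> = \<sigma>^2 * (real n * \<sigma>^2)"
    by (simp add: integral_gauss_vec_sum_squares)
  also have "\<dots> = real n * \<sigma>^4"
    by (simp add: power2_eq_square power4_eq_xxxx)
  finally show "(\<integral>p. (\<Sum>i<n. fst p i * snd p i)^2 \<partial>(gauss_vec n \<sigma> \<Otimes>\<^sub>M gauss_vec n \<sigma>)) = real n * \<sigma>^4" .
qed

end

definition centered :: "nat \<Rightarrow> (nat \<Rightarrow> real) \<Rightarrow> nat \<Rightarrow> real" where
  "centered n y i = y i - (\<Sum>j<n. y j) / real n"

lemma centered_cong: "(\<And>j. j < n \<Longrightarrow> y j = z j) \<Longrightarrow> y i = z i \<Longrightarrow> centered n y i = centered n z i"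
  unfolding centered_def by (metis lessThan_iff sum.cong)

lemma centered_add: "centered n (\<lambda>i. y i + z i) i = centered n y i + centered n z i"
  by (simp add: centered_def sum.distrib add_divide_distrib)

lemma sum_mult_centered:
  "(\<Sum>i<n. centered n y i * centered n z i) = (\<Sum>i<n. y i * z i) - (\<Sum>i<n. y i) * (\<Sum>i<n. z i) / real n"
proof (cases "n = 0")
  case False
  let ?S = "\<Sum>i<n. y i" and ?T = "\<Sum>i<n. z i"
  have "(\<Sum>i<n. centered n y i * centered n z i) =
      (\<Sum>i<n. y i * z i - (?T / n) * y i - (?S / n) * z i + (?S / n) * (?T / n))"
    by (intro sum.cong refl) (simp add: centered_def algebra_simps)
  also have "\<dots> = (\<Sum>i<n. y i * z i) - (?T / n) * ?S - (?S / n) * ?T + n * ((?S / n) * (?T / n))"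
    by (simp add: sum.distrib sum_subtractf sum_distrib_left)
  also have "\<dots> = (\<Sum>i<n. y i * z i) - ?S * ?T / n"
    using False by (simp add: field_simps)
  finally show ?thesis .
qed simp

lemma sum_square_centered:
  "(\<Sum>i<n. (centered n y i)^2) = (\<Sum>i<n. (y i)^2) - (\<Sum>i<n. y i)^2 / real n"
  using sum_mult_centered[of n y y] by (simp add: power2_eq_square)

lemma L2_set_centered_le: "L2_set (centered n y) {..<n} \<le> L2_set y {..<n}"
  unfolding L2_set_def using sum_square_centered[of n y]
  by (intro real_sqrt_le_mono) simp

lemma scalar_prod_vec: "scalar_prod (vec n a) (vec n b) = (\<Sum>i<n. a i * b i)"
  by (simp add: scalar_prod_def atLeast0LessThan)

lemma vnorm_vec: "vnorm (vec n a) = L2_set a {..<n}"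
  by (simp add: vnorm_def scalar_prod_vec L2_set_def power2_eq_square)

lemma vnorm_eq_L2_set: "v \<in> carrier_vec n \<Longrightarrow> vnorm v = L2_set (\<lambda>i. v $ i) {..<n}"
  by (simp add: vnorm_def scalar_prod_def L2_set_def atLeast0LessThan power2_eq_square)

lemma proj_perp_mult_vec:
  assumes "y \<in> carrier_vec n"
  shows "proj_perp n *\<^sub>v y = vec n (centered n (\<lambda>i. y $ i))"
proof (rule eq_vecI)
  fix i assume "i < dim_vec (vec n (centered n (\<lambda>i. y $ i)))"
  then have i: "i < n" by simp
  have "(proj_perp n *\<^sub>v y) $ i = (\<Sum>j<n. (if i = j then y $ j else 0) - y $ j / real n)"
    using i assms
    by (auto simp: proj_perp_def scalar_prod_def atLeast0LessThan row_def algebra_simps intro!: sum.cong)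
  also have "\<dots> = centered n (\<lambda>i. y $ i) i"
    using i by (simp add: centered_def sum_subtractf sum_divide_distrib)
  finally show "(proj_perp n *\<^sub>v y) $ i = vec n (centered n (\<lambda>i. y $ i)) $ i"
    using i by simp
qed (simp add: proj_perp_def)

lemma vnorm_proj_perp_vec: "vnorm (proj_perp n *\<^sub>v vec n \<xi>) = L2_set (centered n \<xi>) {..<n}"
proof -
  have "centered n (\<lambda>i. vec n \<xi> $ i) i = centered n \<xi> i" if "i < n" for i
    using that by (intro centered_cong) auto
  then show ?thesis
    by (auto simp: proj_perp_mult_vec vnorm_vec intro!: L2_set_cong)
qed

lemma layer_norm_add_vec:
  assumes s: "s \<in> carrier_vec n"
  defines "a \<equiv> centered n (\<lambda>i. s $ i)"
  shows "layer_norm n (s + vec n \<xi>) =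
    vec n (\<lambda>i. (a i + centered n \<xi> i) / L2_set (\<lambda>i. a i + centered n \<xi> i) {..<n})"
proof -
  have centered_sum: "centered n (\<lambda>i. (s + vec n \<xi>) $ i) i = a i + centered n \<xi> i" if "i < n" for i
  proof -
    have "centered n (\<lambda>i. (s + vec n \<xi>) $ i) i = centered n (\<lambda>i. s $ i + \<xi> i) i"
      using s that by (intro centered_cong) auto
    then show ?thesis
      by (simp add: a_def centered_add)
  qed
  have norm_sum: "L2_set (centered n (\<lambda>i. (s + vec n \<xi>) $ i)) {..<n} = L2_set (\<lambda>i. a i + centered n \<xi> i) {..<n}"
    using centered_sum by (intro L2_set_cong) auto
  have "layer_norm n (s + vec n \<xi>) =
      (1 / L2_set (centered n (\<lambda>i. (s + vec n \<xi>) $ i)) {..<n}) \<cdot>\<^sub>v vec n (centered n (\<lambda>i. (s + vec n \<xi>) $ i))"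
    using s by (simp add: layer_norm_def proj_perp_mult_vec vnorm_vec)
  then show ?thesis
    unfolding norm_sum using centered_sum by (intro eq_vecI) auto
qed

lemma abs_sum_mult_le_L2_set: "\<bar>\<Sum>i\<in>A. f i * g i\<bar> \<le> L2_set f A * L2_set g A"
  by (rule order.trans[OF sum_abs]) (simp add: abs_mult L2_set_mult_ineq)

lemma L2_set_add_ge: "L2_set w A - L2_set a A \<le> L2_set (\<lambda>i. a i + w i) A"
  using L2_set_triangle_ineq[of "\<lambda>i. a i + w i" "\<lambda>i. - a i" A]
  by (simp add: L2_set_def)

lemma abs_sum_mult_perturbed_le:
  fixes a b w w' :: "'i \<Rightarrow> real" and A :: "'i set"
  defines "D \<equiv> L2_set (\<lambda>i. a i + w i) A" and "D' \<equiv> L2_set (\<lambda>i. b i + w' i) A"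
  shows "\<bar>\<Sum>i\<in>A. (a i + w i) * (b i + w' i)\<bar> \<le>
    3 * (L2_set a A * L2_set b A) + L2_set a A * D' + D * L2_set b A + \<bar>\<Sum>i\<in>A. w i * w' i\<bar>"
proof -
  have "(\<Sum>i\<in>A. (a i + w i) * (b i + w' i)) =
      (\<Sum>i\<in>A. a i * b i) + (\<Sum>i\<in>A. a i * w' i) + (\<Sum>i\<in>A. w i * b i) + (\<Sum>i\<in>A. w i * w' i)"
    by (simp add: algebra_simps sum.distrib)
  moreover have "\<bar>\<Sum>i\<in>A. a i * w' i\<bar> \<le> L2_set a A * (D' + L2_set b A)"
    using abs_sum_mult_le_L2_set[of a w' A] L2_set_add_ge[of w' A b]
    by (smt (verit) D'_def L2_set_nonneg mult_left_mono)
  moreover have "\<bar>\<Sum>i\<in>A. w i * b i\<bar> \<le> (D + L2_set a A) * L2_set b A"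
    using abs_sum_mult_le_L2_set[of w b A] L2_set_add_ge[of w A a]
    by (smt (verit) D_def L2_set_nonneg mult_right_mono)
  ultimately show ?thesis
    using abs_sum_mult_le_L2_set[of a b A] by (simp add: algebra_simps)
qed

lemma L2_set_perturbed_ge:
  assumes "L2_set a A \<le> \<gamma> * R" "(1 - \<eta>) * R \<le> L2_set w A"
    and "\<gamma> \<le> 1/8" "\<eta> \<le> 1/8" "0 < R"
  shows "R \<le> 4/3 * L2_set (\<lambda>i. a i + w i) A"
proof -
  have "\<gamma> * R \<le> R / 8" "\<eta> * R \<le> R / 8"
    using assms by (auto intro: mult_right_mono)
  then show ?thesis
    using L2_set_add_ge[of w A a] assms(1,2) by (simp add: algebra_simps)
qed

lemma abs_sum_mult_normalized_perturbed_le: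
  fixes a b w w' :: "'i \<Rightarrow> real"
  assumes a: "L2_set a A \<le> \<gamma> * R" and b: "L2_set b A \<le> \<gamma> * R"
    and w: "L2_set w A \<ge> (1 - \<eta>) * R" and w': "L2_set w' A \<ge> (1 - \<eta>) * R"
    and ww': "\<bar>\<Sum>i\<in>A. w i * w' i\<bar> \<le> \<eta> * R^2"
    and \<gamma>: "0 \<le> \<gamma>" "\<gamma> \<le> 1/8" and \<eta>: "0 < \<eta>" "\<eta> \<le> 1/8" "\<eta> \<le> \<epsilon>/2" and R: "R > 0"
  shows "\<bar>\<Sum>i\<in>A. ((a i + w i) / L2_set (\<lambda>i. a i + w i) A) * ((b i + w' i) / L2_set (\<lambda>i. b i + w' i) A)\<bar>
    \<le> \<epsilon> + 8 * \<gamma>"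
proof -
  define D where "D = L2_set (\<lambda>i. a i + w i) A"
  define D' where "D' = L2_set (\<lambda>i. b i + w' i) A"
  have RD: "R \<le> 4/3 * D" "R \<le> 4/3 * D'"
    unfolding D_def D'_def using L2_set_perturbed_ge a b w w' \<gamma> \<eta> R by auto
  then have D: "D > 0" "D' > 0"
    using R by simp_all
  have a0: "0 \<le> L2_set a A" "0 \<le> L2_set b A"
    by simp_all
  have "R * R \<le> (4/3 * D) * (4/3 * D')"
    using RD R by (intro mult_mono) auto
  then have R2: "R^2 \<le> 16/9 * (D * D')"
    by (simp add: power2_eq_square)
  have "L2_set a A * L2_set b A \<le> (\<gamma> * R) * (\<gamma> * R)"
    using a b a0 \<gamma> R by (intro mult_mono) auto
  also have "\<dots> = (\<gamma> * \<gamma>) * R^2"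
    by (simp add: power2_eq_square)
  also have "\<dots> \<le> (\<gamma> / 8) * R^2"
    using mult_left_mono[OF \<gamma>(2) \<gamma>(1)] by (intro mult_right_mono) auto
  also have "\<dots> \<le> (\<gamma> / 8) * (16/9 * (D * D'))"
    using R2 \<gamma> by (intro mult_left_mono) auto
  finally have ab: "3 * (L2_set a A * L2_set b A) \<le> 2/3 * \<gamma> * (D * D')"
    by (simp add: algebra_simps)
  have "L2_set a A * D' + D * L2_set b A \<le> \<gamma> * R * D' + D * (\<gamma> * R)"
    using a b D by (intro add_mono mult_right_mono mult_left_mono) auto
  also have "\<dots> \<le> \<gamma> * (4/3 * D) * D' + D * (\<gamma> * (4/3 * D'))"
    using RD D \<gamma> by (intro add_mono mult_right_mono mult_left_mono) auto
  finally have aD: "L2_set a A * D' + D * L2_set b A \<le> 8/3 * \<gamma> * (D * D')"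
    by (simp add: algebra_simps)
  have "\<eta> * R^2 \<le> (\<epsilon>/2) * (16/9 * (D * D'))"
    using R2 \<eta> by (intro mult_mono) auto
  moreover have "0 \<le> \<gamma> * (D * D')" "0 \<le> \<epsilon> * (D * D')"
    using D \<gamma> \<eta> by simp_all
  ultimately have "\<bar>\<Sum>i\<in>A. (a i + w i) * (b i + w' i)\<bar> \<le> (\<epsilon> + 8 * \<gamma>) * (D * D')"
    using abs_sum_mult_perturbed_le[of a w b w' A] ab aD ww'
    unfolding D_def[symmetric] D'_def[symmetric] distrib_right by linarith
  moreover have "(\<Sum>i\<in>A. ((a i + w i) / D) * ((b i + w' i) / D')) = (\<Sum>i\<in>A. (a i + w i) * (b i + w' i)) / (D * D')"
    by (simp add: sum_divide_distrib)
  ultimately show ?thesis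
    using D unfolding D_def[symmetric] D'_def[symmetric] by (simp add: abs_div pos_divide_le_eq)
qed

definition typical_noise :: "nat \<Rightarrow> real \<Rightarrow> real \<Rightarrow> (nat \<Rightarrow> real) \<Rightarrow> bool" where
  "typical_noise n \<sigma> \<tau> \<xi> \<longleftrightarrow>
     \<bar>\<Sum>i<n. \<xi> i\<bar> < \<tau> * n * \<sigma> \<and> \<bar>(\<Sum>i<n. (\<xi> i)^2) - n * \<sigma>^2\<bar> < \<tau>^2 * n * \<sigma>^2"

definition typical_noise_pair :: "nat \<Rightarrow> real \<Rightarrow> real \<Rightarrow> (nat \<Rightarrow> real) \<times> (nat \<Rightarrow> real) \<Rightarrow> bool" where
  "typical_noise_pair n \<sigma> \<tau> p \<longleftrightarrow>
     typical_noise n \<sigma> \<tau> (fst p) \<and> typical_noise n \<sigma> \<tau> (snd p) \<and>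
     \<bar>\<Sum>i<n. fst p i * snd p i\<bar> < \<tau>^2 * n * \<sigma>^2"

lemma typical_noise_L2_centered_ge:
  assumes "typical_noise n \<sigma> \<tau> \<xi>" and "0 < \<sigma>" "0 < n" "2 * \<tau>^2 \<le> 1"
  shows "(1 - 2 * \<tau>^2) * (\<sigma> * sqrt n) \<le> L2_set (centered n \<xi>) {..<n}"
proof -
  let ?S = "\<Sum>i<n. \<xi> i" and ?Q = "\<Sum>i<n. (\<xi> i)^2" and ?\<eta> = "2 * \<tau>^2"
  have S: "\<bar>?S\<bar> < \<tau> * n * \<sigma>" and Q: "\<bar>?Q - n * \<sigma>^2\<bar> < \<tau>^2 * n * \<sigma>^2"
    using assms(1) by (auto simp: typical_noise_def)
  have "?S^2 < (\<tau> * n * \<sigma>)^2"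
    using S by (metis abs_ge_zero power2_abs power_strict_mono zero_less_numeral)
  then have "?S^2 / n < \<tau>^2 * n * \<sigma>^2"
    using assms(3) by (simp add: divide_less_eq power_mult_distrib power2_eq_square algebra_simps)
  then have "(1 - ?\<eta>) * (\<sigma>^2 * n) \<le> (\<Sum>i<n. (centered n \<xi> i)^2)"
    using Q by (simp add: sum_square_centered algebra_simps abs_less_iff)
  moreover have "((1 - ?\<eta>) * (\<sigma> * sqrt n))^2 \<le> (1 - ?\<eta>) * (\<sigma>^2 * n)"
  proof -
    have "(1 - ?\<eta>)^2 \<le> 1 - ?\<eta>"
      using assms(4) by (simp add: power2_eq_square mult_left_le_one_le)
    then have "(1 - ?\<eta>)^2 * (\<sigma>^2 * n) \<le> (1 - ?\<eta>) * (\<sigma>^2 * n)"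
      by (intro mult_right_mono) auto
    then show ?thesis
      by (simp add: power_mult_distrib)
  qed
  ultimately have "((1 - ?\<eta>) * (\<sigma> * sqrt n))^2 \<le> (L2_set (centered n \<xi>) {..<n})^2"
    by (simp add: L2_set_def sum_nonneg)
  then show ?thesis
    by (rule power2_le_imp_le) simp
qed

lemma typical_noise_pair_centered_inner_le:
  assumes "typical_noise_pair n \<sigma> \<tau> (\<xi>, \<xi>')" and "0 < n"
  shows "\<bar>\<Sum>i<n. centered n \<xi> i * centered n \<xi>' i\<bar> \<le> 2 * \<tau>^2 * (\<sigma> * sqrt n)^2"
proof -
  have S: "\<bar>\<Sum>i<n. \<xi> i\<bar> < \<tau> * n * \<sigma>" "\<bar>\<Sum>i<n. \<xi>' i\<bar> < \<tau> * n * \<sigma>"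
    and cross: "\<bar>\<Sum>i<n. \<xi> i * \<xi>' i\<bar> < \<tau>^2 * n * \<sigma>^2"
    using assms(1) by (auto simp: typical_noise_pair_def typical_noise_def)
  have "\<bar>(\<Sum>i<n. \<xi> i) * (\<Sum>i<n. \<xi>' i)\<bar> \<le> (\<tau> * n * \<sigma>) * (\<tau> * n * \<sigma>)"
    unfolding abs_mult using S by (intro mult_mono) auto
  then have "\<bar>(\<Sum>i<n. \<xi> i) * (\<Sum>i<n. \<xi>' i) / n\<bar> \<le> \<tau>^2 * n * \<sigma>^2"
    using assms(2) by (simp add: power2_eq_square divide_le_eq algebra_simps)
  moreover have "2 * \<tau>^2 * (\<sigma> * sqrt n)^2 = 2 * (\<tau>^2 * n * \<sigma>^2)"
    by (simp add: power_mult_distrib)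
  ultimately show ?thesis
    unfolding sum_mult_centered using cross
      abs_triangle_ineq4[of "\<Sum>i<n. \<xi> i * \<xi>' i" "(\<Sum>i<n. \<xi> i) * (\<Sum>i<n. \<xi>' i) / n"]
    by linarith
qed

context
  fixes \<sigma> :: real
  assumes \<sigma>: "0 < \<sigma>"
begin

lemma prob_not_typical_noise_le:
  assumes "0 < \<tau>" "0 < n"
  shows "measure (gauss_vec n \<sigma>) {\<xi> \<in> space (gauss_vec n \<sigma>). \<not> typical_noise n \<sigma> \<tau> \<xi>}
    \<le> 1 / (\<tau>^2 * n) + 2 / (\<tau>^4 * n)"
proof -
  interpret G: prob_space "gauss_vec n \<sigma>" by (rule prob_space_gauss_vec[OF \<sigma>])
  define sum_dev where
    "sum_dev = {\<xi> \<in> space (gauss_vec n \<sigma>). \<tau> * n * \<sigma> \<le> \<bar>\<Sum>i<n. 1 * \<xi> i\<bar>}"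
  define square_dev where
    "square_dev = {\<xi> \<in> space (gauss_vec n \<sigma>). \<tau>^2 * n * \<sigma>^2 \<le> \<bar>\<Sum>i<n. (\<xi> i)^2 - \<sigma>^2\<bar>}"
  have "measure (gauss_vec n \<sigma>) sum_dev \<le> (\<integral>\<xi>. (\<Sum>i<n. 1 * \<xi> i)^2 \<partial>gauss_vec n \<sigma>) / (\<tau> * n * \<sigma>)^2"
    unfolding sum_dev_def using assms \<sigma>
    by (intro G.second_moment_method) (use integrable_gauss_vec_linear_square[OF \<sigma>, of n "\<lambda>_. 1"] in auto)
  also have "\<dots> = \<sigma>^2 * (\<Sum>i<n. 1^2) / (\<tau> * n * \<sigma>)^2"
    by (simp only: integral_gauss_vec_linear_square[OF \<sigma>])
  also have "\<dots> = 1 / (\<tau>^2 * n)"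
    using assms \<sigma> by (simp add: power2_eq_square field_simps)
  finally have sum: "measure (gauss_vec n \<sigma>) sum_dev \<le> 1 / (\<tau>^2 * n)" .
  have "measure (gauss_vec n \<sigma>) square_dev
      \<le> (\<integral>\<xi>. (\<Sum>i<n. (\<xi> i)^2 - \<sigma>^2)^2 \<partial>gauss_vec n \<sigma>) / (\<tau>^2 * n * \<sigma>^2)^2"
    unfolding square_dev_def using assms \<sigma>
    by (intro G.second_moment_method) (auto simp: integrable_gauss_vec_sum_squares_variance[OF \<sigma>])
  also have "\<dots> = (2 * n * \<sigma>^4) / (\<tau>^2 * n * \<sigma>^2)^2"
    by (simp only: integral_gauss_vec_sum_squares_variance[OF \<sigma>])
  also have "\<dots> = 2 / (\<tau>^4 * n)"
    using assms \<sigma> by (simp add: power2_eq_square power4_eq_xxxx field_simps)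
  finally have square: "measure (gauss_vec n \<sigma>) square_dev \<le> 2 / (\<tau>^4 * n)" .
  have "{\<xi> \<in> space (gauss_vec n \<sigma>). \<not> typical_noise n \<sigma> \<tau> \<xi>} \<subseteq> sum_dev \<union> square_dev"
    by (auto simp: typical_noise_def sum_dev_def square_dev_def sum_subtractf)
  then have "measure (gauss_vec n \<sigma>) {\<xi> \<in> space (gauss_vec n \<sigma>). \<not> typical_noise n \<sigma> \<tau> \<xi>}
      \<le> measure (gauss_vec n \<sigma>) (sum_dev \<union> square_dev)"
    unfolding sum_dev_def square_dev_def by (intro G.finite_measure_mono) measurable
  also have "\<dots> \<le> measure (gauss_vec n \<sigma>) sum_dev + measure (gauss_vec n \<sigma>) square_dev"
    unfolding sum_dev_def square_dev_def by (intro measure_Un_le) measurable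
  finally show ?thesis
    using sum square by simp
qed

lemma prob_large_noise_inner_le:
  assumes "0 < \<tau>" "0 < n"
  defines "G \<equiv> gauss_vec n \<sigma> \<Otimes>\<^sub>M gauss_vec n \<sigma>"
  shows "measure G {p \<in> space G. \<tau>^2 * n * \<sigma>^2 \<le> \<bar>\<Sum>i<n. fst p i * snd p i\<bar>} \<le> 1 / (\<tau>^4 * n)"
proof -
  interpret G: prob_space "gauss_vec n \<sigma>" by (rule prob_space_gauss_vec[OF \<sigma>])
  interpret pair_prob_space "gauss_vec n \<sigma>" "gauss_vec n \<sigma>" ..
  have "measure G {p \<in> space G. \<tau>^2 * n * \<sigma>^2 \<le> \<bar>\<Sum>i<n. fst p i * snd p i\<bar>}
      \<le> (\<integral>p. (\<Sum>i<n. fst p i * snd p i)^2 \<partial>G) / (\<tau>^2 * n * \<sigma>^2)^2"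
    unfolding G_def using assms \<sigma>
    by (intro second_moment_method) (auto simp: integrable_gauss_vec_pair_inner_square[OF \<sigma>])
  also have "\<dots> = (n * \<sigma>^4) / (\<tau>^2 * n * \<sigma>^2)^2"
    unfolding G_def by (simp only: integral_gauss_vec_pair_inner_square[OF \<sigma>])
  also have "\<dots> = 1 / (\<tau>^4 * n)"
    using assms \<sigma> by (simp add: power2_eq_square power4_eq_xxxx field_simps)
  finally show ?thesis .
qed

lemma prob_typical_noise_pair_ge:
  assumes "0 < \<tau>" "0 < n"
  defines "G \<equiv> gauss_vec n \<sigma> \<Otimes>\<^sub>M gauss_vec n \<sigma>"
  shows "1 - (2 / (\<tau>^2 * n) + 5 / (\<tau>^4 * n)) \<le> measure G {p \<in> space G. typical_noise_pair n \<sigma> \<tau> p}"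
proof -
  interpret G: prob_space "gauss_vec n \<sigma>" by (rule prob_space_gauss_vec[OF \<sigma>])
  interpret pair_prob_space "gauss_vec n \<sigma>" "gauss_vec n \<sigma>" ..
  define B where "B = {\<xi> \<in> space (gauss_vec n \<sigma>). \<not> typical_noise n \<sigma> \<tau> \<xi>}"
  define cross where "cross = {p \<in> space G. \<tau>^2 * n * \<sigma>^2 \<le> \<bar>\<Sum>i<n. fst p i * snd p i\<bar>}"
  have B: "B \<in> sets (gauss_vec n \<sigma>)"
    unfolding B_def typical_noise_def by measurable
  have sets: "B \<times> space (gauss_vec n \<sigma>) \<in> sets G" "space (gauss_vec n \<sigma>) \<times> B \<in> sets G" "cross \<in> sets G"
    using B unfolding G_def cross_def by auto
  have measure_B: "measure G (B \<times> space (gauss_vec n \<sigma>)) = measure (gauss_vec n \<sigma>) B"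
    "measure G (space (gauss_vec n \<sigma>) \<times> B) = measure (gauss_vec n \<sigma>) B"
    using B unfolding G_def by (simp_all add: measure_def G.emeasure_pair_measure_Times G.emeasure_space_1)
  have "space G - {p \<in> space G. typical_noise_pair n \<sigma> \<tau> p}
      \<subseteq> (B \<times> space (gauss_vec n \<sigma>) \<union> space (gauss_vec n \<sigma>) \<times> B) \<union> cross"
    by (auto simp: typical_noise_pair_def B_def cross_def G_def space_pair_measure)
  then have "measure G (space G - {p \<in> space G. typical_noise_pair n \<sigma> \<tau> p})
      \<le> measure G ((B \<times> space (gauss_vec n \<sigma>) \<union> space (gauss_vec n \<sigma>) \<times> B) \<union> cross)"
    using sets unfolding G_def by (intro finite_measure_mono) auto
  also have "\<dots> \<le> 2 * measure (gauss_vec n \<sigma>) B + measure G cross"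
    using sets measure_Un_le[of "B \<times> space (gauss_vec n \<sigma>)" G "space (gauss_vec n \<sigma>) \<times> B"]
      measure_Un_le[of "B \<times> space (gauss_vec n \<sigma>) \<union> space (gauss_vec n \<sigma>) \<times> B" G cross]
    unfolding measure_B by auto
  also have "\<dots> \<le> 2 * (1 / (\<tau>^2 * n) + 2 / (\<tau>^4 * n)) + 1 / (\<tau>^4 * n)"
    using prob_not_typical_noise_le[OF assms(1,2)] prob_large_noise_inner_le[OF assms(1,2)]
    unfolding B_def cross_def G_def by (intro add_mono mult_left_mono) simp_all
  also have "\<dots> = 2 / (\<tau>^2 * n) + 5 / (\<tau>^4 * n)"
    using assms by (simp add: field_simps)
  finally have "measure G (space G - {p \<in> space G. typical_noise_pair n \<sigma> \<tau> p})
      \<le> 2 / (\<tau>^2 * n) + 5 / (\<tau>^4 * n)" .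
  moreover have "{p \<in> space G. typical_noise_pair n \<sigma> \<tau> p} \<in> sets G"
    unfolding G_def typical_noise_pair_def typical_noise_def by measurable
  ultimately show ?thesis
    unfolding G_def by (simp add: prob_compl)
qed

lemma
  assumes "0 < n"
  shows integrable_L2_centered: "integrable (gauss_vec n \<sigma>) (\<lambda>\<xi>. L2_set (centered n \<xi>) {..<n})"
    and integral_L2_centered_le: "(\<integral>\<xi>. L2_set (centered n \<xi>) {..<n} \<partial>gauss_vec n \<sigma>) \<le> \<sigma> * sqrt n"
proof -
  interpret G: prob_space "gauss_vec n \<sigma>" by (rule prob_space_gauss_vec[OF \<sigma>])
  define R where "R = \<sigma> * sqrt n"
  have R: "0 < R" "R^2 = n * \<sigma>^2"
    using \<sigma> assms by (simp_all add: R_def power_mult_distrib)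
  have measurable [measurable]: "(\<lambda>\<xi>. L2_set (centered n \<xi>) {..<n}) \<in> borel_measurable (gauss_vec n \<sigma>)"
    unfolding L2_set_def centered_def by measurable
  \<comment> \<open>AM-GM with \<open>R\<^sup>2 = E Q\<close>, so that the bound has expectation exactly \<open>R\<close>\<close>
  have bound: "L2_set (centered n \<xi>) {..<n} \<le> ((\<Sum>i<n. (\<xi> i)^2) / R + R) / 2" for \<xi>
  proof -
    let ?Q = "\<Sum>i<n. (\<xi> i)^2"
    have "0 \<le> (sqrt ?Q - R)^2"
      by simp
    then have "2 * R * sqrt ?Q \<le> ?Q + R^2"
      by (simp add: sum_nonneg power2_eq_square algebra_simps)
    then have "sqrt ?Q \<le> (?Q / R + R) / 2"
      using R by (simp add: field_simps power2_eq_square)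
    then show ?thesis
      using L2_set_centered_le[of n \<xi>] unfolding L2_set_def by linarith
  qed
  have bound_integrable: "integrable (gauss_vec n \<sigma>) (\<lambda>\<xi>. ((\<Sum>i<n. (\<xi> i)^2) / R + R) / 2)"
    using integrable_gauss_vec_sum_squares[OF \<sigma>] by simp
  show integrable: "integrable (gauss_vec n \<sigma>) (\<lambda>\<xi>. L2_set (centered n \<xi>) {..<n})"
  proof (rule Bochner_Integration.integrable_bound[OF bound_integrable])
    show "AE \<xi> in gauss_vec n \<sigma>. norm (L2_set (centered n \<xi>) {..<n}) \<le> norm (((\<Sum>i<n. (\<xi> i)^2) / R + R) / 2)"
      using bound by (intro AE_I2) (smt (verit) L2_set_nonneg real_norm_def)
  qed simp
  have "(\<integral>\<xi>. L2_set (centered n \<xi>) {..<n} \<partial>gauss_vec n \<sigma>) \<le> (\<integral>\<xi>. ((\<Sum>i<n. (\<xi> i)^2) / R + R) / 2 \<partial>gauss_vec n \<sigma>)"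
    by (rule integral_mono[OF integrable bound_integrable bound])
  also have "\<dots> = (n * \<sigma>^2 / R + R) / 2"
    using integrable_gauss_vec_sum_squares[OF \<sigma>]
    by (simp add: integral_gauss_vec_sum_squares[OF \<sigma>] G.prob_space)
  also have "\<dots> = R"
    using R by (simp add: field_simps power2_eq_square)
  finally show "(\<integral>\<xi>. L2_set (centered n \<xi>) {..<n} \<partial>gauss_vec n \<sigma>) \<le> \<sigma> * sqrt n"
    unfolding R_def .
qed

lemma integral_L2_centered_pos:
  assumes n: "36 < n"
  shows "0 < (\<integral>\<xi>. L2_set (centered n \<xi>) {..<n} \<partial>gauss_vec n \<sigma>)"
proof (rule ccontr)
  interpret G: prob_space "gauss_vec n \<sigma>" by (rule prob_space_gauss_vec[OF \<sigma>])
  assume "\<not> ?thesis"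
  moreover have "0 \<le> (\<integral>\<xi>. L2_set (centered n \<xi>) {..<n} \<partial>gauss_vec n \<sigma>)"
    by (rule Bochner_Integration.integral_nonneg) simp
  ultimately have "(\<integral>\<xi>. L2_set (centered n \<xi>) {..<n} \<partial>gauss_vec n \<sigma>) = 0"
    by linarith
  then have null: "AE \<xi> in gauss_vec n \<sigma>. L2_set (centered n \<xi>) {..<n} = 0"
    using integral_nonneg_eq_0_iff_AE[OF integrable_L2_centered] n by simp
  have typical_pos: "0 < L2_set (centered n \<xi>) {..<n}" if "typical_noise n \<sigma> (1/2) \<xi>" for \<xi>
  proof -
    have "0 < 1/2 * (\<sigma> * sqrt n)"
      using \<sigma> n by simp
    also have "\<dots> \<le> L2_set (centered n \<xi>) {..<n}"
      using typical_noise_L2_centered_ge[OF that \<sigma>] n by (simp add: power_divide)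
    finally show ?thesis .
  qed
  have "AE \<xi> in gauss_vec n \<sigma>. \<not> typical_noise n \<sigma> (1/2) \<xi>"
    using null
  proof eventually_elim
    case (elim \<xi>)
    then show ?case
      using typical_pos[of \<xi>] by auto
  qed
  then have "\<P>(\<xi> in gauss_vec n \<sigma>. typical_noise n \<sigma> (1/2) \<xi>) = 0"
    by (rule G.prob_eq_0_AE)
  moreover have "\<P>(\<xi> in gauss_vec n \<sigma>. \<not> typical_noise n \<sigma> (1/2) \<xi>) \<le> 36 / n"
    using prob_not_typical_noise_le[of "1/2" n] n by (simp add: power_divide)
  moreover have "{\<xi> \<in> space (gauss_vec n \<sigma>). typical_noise n \<sigma> (1/2) \<xi>} \<in> sets (gauss_vec n \<sigma>)"
    unfolding typical_noise_def by measurable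
  ultimately show False
    using n by (simp add: G.prob_neg)
qed

end

lemma scalar_prod_layer_norm_add_vec:
  assumes "s \<in> carrier_vec n" "s' \<in> carrier_vec n"
  defines "a \<equiv> centered n (\<lambda>i. s $ i)" and "b \<equiv> centered n (\<lambda>i. s' $ i)"
  shows "scalar_prod (layer_norm n (s + vec n \<xi>)) (layer_norm n (s' + vec n \<xi>')) = (\<Sum>i<n.
    ((a i + centered n \<xi> i) / L2_set (\<lambda>i. a i + centered n \<xi> i) {..<n}) *
    ((b i + centered n \<xi>' i) / L2_set (\<lambda>i. b i + centered n \<xi>' i) {..<n}))"
  unfolding layer_norm_add_vec[OF assms(1)] layer_norm_add_vec[OF assms(2)] scalar_prod_vec a_def b_def
  by simp

lemma typical_noise_pair_abs_inner_layer_norm_le: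
  assumes \<sigma>: "0 < \<sigma>" and n: "0 < n"
    and \<eta>: "0 < \<eta>" "\<eta> \<le> 1/8" "\<eta> \<le> \<epsilon>/2" and \<gamma>: "0 \<le> \<gamma>" "\<gamma> \<le> 1/8"
    and s: "s \<in> carrier_vec n" "s' \<in> carrier_vec n"
    and signal: "vnorm s \<le> \<gamma> * (\<sigma> * sqrt n)" "vnorm s' \<le> \<gamma> * (\<sigma> * sqrt n)"
    and typical: "typical_noise_pair n \<sigma> (sqrt (\<eta> / 2)) (\<xi>, \<xi>')"
  shows "\<bar>scalar_prod (layer_norm n (s + vec n \<xi>)) (layer_norm n (s' + vec n \<xi>'))\<bar> \<le> \<epsilon> + 8 * \<gamma>"
proof -
  have \<tau>: "2 * sqrt (\<eta> / 2)^2 = \<eta>"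
    using \<eta> by simp
  have lower: "(1 - \<eta>) * (\<sigma> * sqrt n) \<le> L2_set (centered n \<zeta>) {..<n}"
    if "typical_noise n \<sigma> (sqrt (\<eta> / 2)) \<zeta>" for \<zeta>
    using typical_noise_L2_centered_ge[OF that \<sigma> n] \<eta> unfolding \<tau> by simp
  have "L2_set (centered n (\<lambda>i. s $ i)) {..<n} \<le> \<gamma> * (\<sigma> * sqrt n)"
    "L2_set (centered n (\<lambda>i. s' $ i)) {..<n} \<le> \<gamma> * (\<sigma> * sqrt n)"
    using L2_set_centered_le[of n "\<lambda>i. s $ i"] L2_set_centered_le[of n "\<lambda>i. s' $ i"] signal
    unfolding vnorm_eq_L2_set[OF s(1)] vnorm_eq_L2_set[OF s(2)] by linarith+
  moreover have "(1 - \<eta>) * (\<sigma> * sqrt n) \<le> L2_set (centered n \<xi>) {..<n}"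
    "(1 - \<eta>) * (\<sigma> * sqrt n) \<le> L2_set (centered n \<xi>') {..<n}"
    using typical lower by (simp_all add: typical_noise_pair_def)
  moreover have "\<bar>\<Sum>i<n. centered n \<xi> i * centered n \<xi>' i\<bar> \<le> \<eta> * (\<sigma> * sqrt n)^2"
    using typical_noise_pair_centered_inner_le[OF typical n] \<tau> by simp
  ultimately show ?thesis
    unfolding scalar_prod_layer_norm_add_vec[OF s]
    by (rule abs_sum_mult_normalized_perturbed_le[OF _ _ _ _ _ \<gamma> \<eta>]) (use \<sigma> n in simp)
qed

lemma prob_abs_inner_layer_norm_le:
  assumes \<sigma>: "0 < \<sigma>" and n: "0 < n"
    and \<eta>: "0 < \<eta>" "\<eta> \<le> 1/8" "\<eta> \<le> \<epsilon>/2" and \<gamma>: "0 \<le> \<gamma>" "\<gamma> \<le> 1/8"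
    and s: "s \<in> carrier_vec n" "s' \<in> carrier_vec n"
    and signal: "vnorm s \<le> \<gamma> * (\<sigma> * sqrt n)" "vnorm s' \<le> \<gamma> * (\<sigma> * sqrt n)"
  defines "G \<equiv> gauss_vec n \<sigma> \<Otimes>\<^sub>M gauss_vec n \<sigma>"
  shows "1 - 24 / (\<eta>^2 * n) \<le> measure G {(\<xi>, \<xi>') \<in> space G.
    \<bar>scalar_prod (layer_norm n (s + vec n \<xi>)) (layer_norm n (s' + vec n \<xi>'))\<bar> \<le> \<epsilon> + 8 * \<gamma>}"
proof -
  interpret G: prob_space "gauss_vec n \<sigma>" by (rule prob_space_gauss_vec[OF \<sigma>])
  interpret pair_prob_space "gauss_vec n \<sigma>" "gauss_vec n \<sigma>" ..
  define \<tau> where "\<tau> = sqrt (\<eta> / 2)"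
  have \<tau>: "0 < \<tau>" "2 * \<tau>^2 = \<eta>"
    using \<eta> by (simp_all add: \<tau>_def)
  have "{(\<xi>, \<xi>') \<in> space G.
      \<bar>scalar_prod (layer_norm n (s + vec n \<xi>)) (layer_norm n (s' + vec n \<xi>'))\<bar> \<le> \<epsilon> + 8 * \<gamma>} \<in> sets G"
    unfolding scalar_prod_layer_norm_add_vec[OF s] centered_def L2_set_def G_def case_prod_beta' prod.collapse
    by measurable
  moreover have "{p \<in> space G. typical_noise_pair n \<sigma> \<tau> p} \<subseteq> {(\<xi>, \<xi>') \<in> space G.
      \<bar>scalar_prod (layer_norm n (s + vec n \<xi>)) (layer_norm n (s' + vec n \<xi>'))\<bar> \<le> \<epsilon> + 8 * \<gamma>}"
    using typical_noise_pair_abs_inner_layer_norm_le[OF \<sigma> n \<eta> \<gamma> s signal] unfolding \<tau>_def by auto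
  ultimately have "measure G {p \<in> space G. typical_noise_pair n \<sigma> \<tau> p} \<le> measure G {(\<xi>, \<xi>') \<in> space G.
      \<bar>scalar_prod (layer_norm n (s + vec n \<xi>)) (layer_norm n (s' + vec n \<xi>'))\<bar> \<le> \<epsilon> + 8 * \<gamma>}"
    unfolding G_def by (intro finite_measure_mono)
  moreover have "1 - 24 / (\<eta>^2 * n) \<le> 1 - (2 / (\<tau>^2 * n) + 5 / (\<tau>^4 * n))"
  proof -
    have "4 / (\<eta> * n) \<le> 4 / (\<eta>^2 * n)"
      using \<eta> n by (intro divide_left_mono mult_right_mono) (auto simp: power2_eq_square mult_le_one)
    moreover have "2 / (\<tau>^2 * n) + 5 / (\<tau>^4 * n) = 4 / (\<eta> * n) + 20 / (\<eta>^2 * n)"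
      unfolding \<tau>(2)[symmetric] using \<tau>(1) n by (simp add: field_simps power2_eq_square power4_eq_xxxx)
    ultimately show ?thesis
      by (simp add: add_divide_distrib[symmetric])
  qed
  ultimately show ?thesis
    using prob_typical_noise_pair_ge[OF \<sigma> \<tau>(1) n] unfolding G_def by linarith
qed

lemma prob_abs_inner_layer_norm_le_snr:
  assumes \<nu>: "0 < \<nu>" and n: "36 < n"
    and \<eta>: "0 < \<eta>" "\<eta> \<le> 1/8" "\<eta> \<le> \<epsilon>/2"
    and s: "s \<in> carrier_vec n" "s' \<in> carrier_vec n"
  defines "G \<equiv> gauss_vec n (\<nu> / sqrt n)"
  defines "\<gamma> \<equiv> max (vnorm s) (vnorm s') / (\<integral>\<xi>. vnorm (proj_perp n *\<^sub>v vec n \<xi>) \<partial>G)"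
  assumes \<gamma>: "\<gamma> \<le> 1/8"
  shows "1 - 24 / (\<eta>^2 * n) \<le> measure (G \<Otimes>\<^sub>M G) {(\<xi>, \<xi>') \<in> space (G \<Otimes>\<^sub>M G).
    \<bar>scalar_prod (layer_norm n (s + vec n \<xi>)) (layer_norm n (s' + vec n \<xi>'))\<bar> \<le> \<epsilon> + 8 * \<gamma>}"
proof -
  define \<sigma> where "\<sigma> = \<nu> / sqrt n"
  have \<sigma>: "0 < \<sigma>" "\<sigma> * sqrt n = \<nu>"
    using \<nu> n by (simp_all add: \<sigma>_def)
  have G: "G = gauss_vec n \<sigma>"
    by (simp add: G_def \<sigma>_def)
  define m where "m = (\<integral>\<xi>. L2_set (centered n \<xi>) {..<n} \<partial>G)"
  have \<gamma>_def': "\<gamma> = max (vnorm s) (vnorm s') / m"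
    unfolding \<gamma>_def m_def vnorm_proj_perp_vec ..
  have m: "0 < m" "m \<le> \<sigma> * sqrt n"
    using integral_L2_centered_pos[OF \<sigma>(1) n] integral_L2_centered_le[OF \<sigma>(1), of n] n
    unfolding m_def G by auto
  have "0 \<le> \<gamma>"
    unfolding \<gamma>_def' vnorm_eq_L2_set[OF s(1)] vnorm_eq_L2_set[OF s(2)] using m(1)
    by (simp add: le_max_iff_disj)
  have "max (vnorm s) (vnorm s') = \<gamma> * m"
    using m(1) unfolding \<gamma>_def' by simp
  also have "\<dots> \<le> \<gamma> * (\<sigma> * sqrt n)"
    using m(2) \<open>0 \<le> \<gamma>\<close> by (rule mult_left_mono)
  finally have "max (vnorm s) (vnorm s') \<le> \<gamma> * (\<sigma> * sqrt n)" .
  then show ?thesis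
    using prob_abs_inner_layer_norm_le[OF \<sigma>(1) _ \<eta> \<open>0 \<le> \<gamma>\<close> \<gamma> s] n
    unfolding G_def \<sigma>_def by simp
qed

lemma one_sub_exp_tail_le:
  fixes K \<delta> \<epsilon> P :: real
  assumes "0 \<le> P" "0 \<le> \<delta>" and large: "K \<le> real n \<Longrightarrow> 1 - \<delta> \<le> P"
  shows "1 - \<delta> - exp (K * \<epsilon>^2) * exp (- 1 * real n * \<epsilon>^2) \<le> P"
proof (cases "K \<le> real n")
  case True
  moreover have "0 \<le> exp (K * \<epsilon>^2) * exp (- 1 * real n * \<epsilon>^2)"
    by simp
  ultimately show ?thesis
    using large by linarith
next
  case False
  then have "real n * \<epsilon>^2 \<le> K * \<epsilon>^2"
    by (intro mult_right_mono) auto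
  then have "1 \<le> exp (K * \<epsilon>^2) * exp (- 1 * real n * \<epsilon>^2)"
    by (simp add: exp_add[symmetric] algebra_simps)
  then show ?thesis
    using assms(1,2) by linarith
qed

lemma dimension_threshold_bounds:
  assumes \<eta>: "0 < \<eta>" "\<eta> \<le> 1/8" and \<delta>: "0 < \<delta>" "\<delta> < 1"
    and n: "24 / (\<eta>^2 * \<delta>) \<le> real n"
  shows "36 < n" and "24 / (\<eta>^2 * n) \<le> \<delta>"
proof -
  have "\<eta>^2 * \<delta> \<le> (1/8)^2 * 1"
    using \<eta> \<delta> by (intro mult_mono power_mono) auto
  then have "36 < 24 / (\<eta>^2 * \<delta>)"
    using \<eta> \<delta> by (simp add: field_simps)
  then show n36: "36 < n"
    using n by linarith
  have "24 / (\<eta>^2 * n) \<le> 24 / (\<eta>^2 * (24 / (\<eta>^2 * \<delta>)))"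
    using n n36 \<eta> \<delta> by (intro divide_left_mono mult_left_mono) auto
  then show "24 / (\<eta>^2 * n) \<le> \<delta>"
    using \<eta> \<delta> by simp
qed

theorem theorem1:
  fixes \<epsilon> \<delta> :: real
  assumes "\<epsilon> > 0" and "0 < \<delta>" and "\<delta> < 1"
  shows "\<exists>C c :: real. c > 0 \<and>
    (\<forall>(n::nat) (M::real mat) (\<nu>::real) (x::real vec) (x'::real vec).
       n \<ge> 3 \<longrightarrow> doubly_stochastic n M \<longrightarrow> primitive_mat n M \<longrightarrow> \<nu> > 0 \<longrightarrow>
       x \<in> carrier_vec n \<longrightarrow> x' \<in> carrier_vec n \<longrightarrow>
       scalar_prod x (ones_vec n) = 0 \<longrightarrow> scalar_prod x' (ones_vec n) = 0 \<longrightarrow>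
       (let s = M *\<^sub>v x; s' = M *\<^sub>v x';
            G = gauss_vec n (\<nu> / sqrt (real n));
            \<gamma> = max (vnorm s) (vnorm s') /
                (\<integral>\<xi>. vnorm (proj_perp n *\<^sub>v vec n \<xi>) \<partial>G)
        in \<gamma> \<le> 1/8 \<longrightarrow>
           measure (G \<Otimes>\<^sub>M G)
             {(\<xi>, \<xi>') \<in> space (G \<Otimes>\<^sub>M G).
                \<bar>scalar_prod (layer_norm n (s + vec n \<xi>)) (layer_norm n (s' + vec n \<xi>'))\<bar>
                  \<le> \<epsilon> + 8 * \<gamma>}
           \<ge> 1 - \<delta> - C * exp (- c * real n * \<epsilon>\<^sup>2)))"
proof -
  define \<eta> where "\<eta> = min (1/8) (\<epsilon>/2)"
  have \<eta>: "0 < \<eta>" "\<eta> \<le> 1/8" "\<eta> \<le> \<epsilon>/2"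
    using assms by (auto simp: \<eta>_def)
  define K where "K = 24 / (\<eta>^2 * \<delta>)"
  show ?thesis
    unfolding Let_def
  proof (rule exI[of _ "exp (K * \<epsilon>^2)"], rule exI[of _ 1], intro conjI allI impI, simp, goal_cases)
    case (1 n M \<nu> x x')
    then have s: "M *\<^sub>v x \<in> carrier_vec n" "M *\<^sub>v x' \<in> carrier_vec n"
      by (auto simp: doubly_stochastic_def)
    show ?case (is "_ \<le> ?P")
    proof (rule one_sub_exp_tail_le[OF measure_nonneg less_imp_le[OF assms(2)]])
      assume "K \<le> real n"
      note n = dimension_threshold_bounds[OF \<eta>(1,2) assms(2,3) this[unfolded K_def]]
      then show "1 - \<delta> \<le> ?P"
        using prob_abs_inner_layer_norm_le_snr[OF \<open>0 < \<nu>\<close> n(1) \<eta> s 1(9)] by linarith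
    qed
  qed
qed

end
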